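(* Let $n>2k>0$ be integers and suppose that $\mathcal G\subset\binom{[n-1]}{k-1}$ and $\mathcal H\subset\binom{[n-1]}{k}$ are cross-intersecting and $|\mathcal G|>\binom{n-1}{k-1}-\binom{n-k}{k-1}$. Then $|\mathcal H|\le k-1$.
   Context: $[m]=\{1,\dots,m\}$ and $\binom{[m]}{t}$ is the collection of all $t$-element subsets of $[m]$. Two families $\mathcal G,\mathcal H$ are cross-intersecting if $G\cap H\neq\emptyset$ for all $G\in\mathcal G$, $H\in\mathcal H$. *)

theory Defs
  imports Main
begin

definition ksets :: "nat \<Rightarrow> nat \<Rightarrow> nat set set" where
  "ksets m t = {A. A \<subseteq> {1..m} \<and> card A = t}"

definition cross_intersecting :: "'a set set \<Rightarrow> 'a set set \<Rightarrow> bool" where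
  "cross_intersecting G H \<longleftrightarrow> (\<forall>A\<in>G. \<forall>B\<in>H. A \<inter> B \<noteq> {})"

end

theory Submission
  imports Defs
begin

text \<open>Put \<open>m = n - 1\<close> and take \<open>k\<close> members of \<open>\<H>\<close>. No \<open>(k-1)\<close>-set disjoint from one of
  them lies in \<open>\<G>\<close>. Adding the chosen members one at a time, the \<open>(i+1)\<close>-st member \<open>B\<close>
  makes at least \<open>C(m-k-i, k-1-i)\<close> further \<open>(k-1)\<close>-sets excluded: pick in each earlier member a
  point outside \<open>B\<close>; every \<open>(k-1)\<close>-set avoiding \<open>B\<close> and containing these at most \<open>i\<close> points
  meets all earlier members. The contributions sum to \<open>C(m-k+1, k-1) = C(n-k, k-1)\<close> by the
  diagonal summation of binomial coefficients, contradicting the lower bound on \<open>|\<G>|\<close>.\<close>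

definition disjoint_ksets :: "nat \<Rightarrow> nat \<Rightarrow> nat set set \<Rightarrow> nat set set" where
  "disjoint_ksets m t F = {A \<in> ksets m t. \<exists>B\<in>F. A \<inter> B = {}}"

lemma finite_ksets: "finite (ksets m t)"
  unfolding ksets_def by (rule finite_subset[of _ "Pow {1..m}"]) auto

lemma card_ksets: "card (ksets m t) = m choose t"
  unfolding ksets_def using n_subsets[of "{1..m}" t] by simp

lemma finite_disjoint_ksets: "finite (disjoint_ksets m t F)"
  unfolding disjoint_ksets_def using finite_ksets by simp

lemma disjoint_ksets_mono: "F \<subseteq> F' \<Longrightarrow> disjoint_ksets m t F \<subseteq> disjoint_ksets m t F'"
  unfolding disjoint_ksets_def by blast

lemma choose_le_choose_add_add: "(a::nat) choose b \<le> (a + d) choose (b + d)"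
proof (induction d)
  case (Suc d)
  then show ?case using le_add1 order_trans by fastforce
qed simp

lemma card_supersets_of_card:
  assumes "finite S" "Y \<subseteq> S" "card Y \<le> t"
  shows "card {A. Y \<subseteq> A \<and> A \<subseteq> S \<and> card A = t} = (card S - card Y) choose (t - card Y)"
proof -
  have finY: "finite Y" using assms(1,2) finite_subset by blast
  have "bij_betw (\<lambda>Z. Y \<union> Z) {Z. Z \<subseteq> S - Y \<and> card Z = t - card Y}
          {A. Y \<subseteq> A \<and> A \<subseteq> S \<and> card A = t}"
  proof (rule bij_betw_byWitness[where f' = "\<lambda>A. A - Y"])
    show "(\<lambda>Z. Y \<union> Z) ` {Z. Z \<subseteq> S - Y \<and> card Z = t - card Y}
            \<subseteq> {A. Y \<subseteq> A \<and> A \<subseteq> S \<and> card A = t}"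
    proof
      fix A assume "A \<in> (\<lambda>Z. Y \<union> Z) ` {Z. Z \<subseteq> S - Y \<and> card Z = t - card Y}"
      then obtain Z where Z: "Z \<subseteq> S - Y" "card Z = t - card Y" "A = Y \<union> Z" by blast
      then have "card A = t"
        using card_Un_disjoint[OF finY, of Z] assms finite_subset[of Z S] by auto
      with Z assms(2) show "A \<in> {A. Y \<subseteq> A \<and> A \<subseteq> S \<and> card A = t}" by auto
    qed
    show "(\<lambda>A. A - Y) ` {A. Y \<subseteq> A \<and> A \<subseteq> S \<and> card A = t}
            \<subseteq> {Z. Z \<subseteq> S - Y \<and> card Z = t - card Y}"
      using assms(1) finY by (auto simp: card_Diff_subset intro: finite_subset)
  qed auto
  then have "card {A. Y \<subseteq> A \<and> A \<subseteq> S \<and> card A = t}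
               = card {Z. Z \<subseteq> S - Y \<and> card Z = t - card Y}"
    by (simp add: bij_betw_same_card)
  also have "\<dots> = (card S - card Y) choose (t - card Y)"
    using n_subsets[of "S - Y" "t - card Y"] assms by (simp add: card_Diff_subset finY)
  finally show ?thesis .
qed

lemma card_disjoint_ksets_insert:
  assumes "t + k \<le> m" "F \<subseteq> ksets m k" "H \<in> ksets m k" "H \<notin> F" "card F \<le> t"
  shows "card (disjoint_ksets m t F) + ((m - k - card F) choose (t - card F))
           \<le> card (disjoint_ksets m t (insert H F))"
proof -
  have H: "H \<subseteq> {1..m}" "card H = k" using assms(3) by (auto simp: ksets_def)
  have finF: "finite F" using assms(2) finite_ksets finite_subset by blast
  have "\<exists>x \<in> B. x \<notin> H" if "B \<in> F" for B
  proof -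
    have "B \<subseteq> {1..m}" "card B = k" "B \<noteq> H" using that assms(2,4) by (auto simp: ksets_def)
    then show ?thesis using H card_subset_eq[of H B] finite_subset[OF H(1)] by auto
  qed
  then obtain y where y: "\<And>B. B \<in> F \<Longrightarrow> y B \<in> B \<and> y B \<notin> H" by metis
  define S where "S = {1..m} - H"
  define N where "N = {A. y ` F \<subseteq> A \<and> A \<subseteq> S \<and> card A = t}"
  have cardY: "card (y ` F) \<le> card F" using card_image_le[OF finF] .
  have YS: "y ` F \<subseteq> S" using y assms(2) unfolding S_def ksets_def by auto
  have cardS: "card S = m - k" unfolding S_def using H by (simp add: card_Diff_subset finite_subset)
  have "(m - k - card F) choose (t - card F)
          \<le> (m - k - card F + (card F - card (y ` F))) choose (t - card F + (card F - card (y ` F)))"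
    by (rule choose_le_choose_add_add)
  also have "\<dots> = card N"
    unfolding N_def using card_supersets_of_card[OF _ YS] cardS cardY assms(1,5)
    by (simp add: S_def)
  finally have N: "(m - k - card F) choose (t - card F) \<le> card N" .
  have "N \<subseteq> disjoint_ksets m t (insert H F) - disjoint_ksets m t F"
  proof
    fix A assume A: "A \<in> N"
    then have "y ` F \<subseteq> A" "A \<subseteq> {1..m} - H" "card A = t"
      unfolding N_def S_def by auto
    then have "A \<in> ksets m t" "A \<inter> H = {}" "\<And>B. B \<in> F \<Longrightarrow> A \<inter> B \<noteq> {}"
      using y unfolding ksets_def by auto
    then show "A \<in> disjoint_ksets m t (insert H F) - disjoint_ksets m t F"
      unfolding disjoint_ksets_def by auto
  qed
  then have "card (disjoint_ksets m t F \<union> N) \<le> card (disjoint_ksets m t (insert H F))"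
    using disjoint_ksets_mono[of F "insert H F" m t] finite_disjoint_ksets
    by (intro card_mono) auto
  moreover have "card (disjoint_ksets m t F \<union> N) = card (disjoint_ksets m t F) + card N"
    using \<open>N \<subseteq> _\<close> finite_disjoint_ksets by (intro card_Un_disjoint) (auto intro: finite_subset)
  ultimately show ?thesis using N by linarith
qed

lemma sum_choose_le_card_disjoint_ksets:
  assumes "t + k \<le> m" "F \<subseteq> ksets m k" "card F \<le> Suc t"
  shows "(\<Sum>i<card F. (m - k - i) choose (t - i)) \<le> card (disjoint_ksets m t F)"
proof -
  have "finite F" using assms(2) finite_ksets finite_subset by blast
  then show ?thesis using assms(2,3)
  proof (induction F rule: finite_induct)
    case (insert H F)
    then have "(\<Sum>i<card F. (m - k - i) choose (t - i)) + ((m - k - card F) choose (t - card F))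
                 \<le> card (disjoint_ksets m t (insert H F))"
      using card_disjoint_ksets_insert[OF assms(1), of F H] by simp
    with insert show ?case by simp
  qed simp
qed

lemma card_add_card_disjoint_ksets_le:
  assumes "G \<subseteq> ksets m t" "cross_intersecting G F"
  shows "card G + card (disjoint_ksets m t F) \<le> m choose t"
proof -
  have "G \<inter> disjoint_ksets m t F = {}"
    using assms(2) unfolding cross_intersecting_def disjoint_ksets_def by blast
  moreover have "G \<union> disjoint_ksets m t F \<subseteq> ksets m t"
    using assms(1) unfolding disjoint_ksets_def by auto
  ultimately have "card G + card (disjoint_ksets m t F) = card (G \<union> disjoint_ksets m t F)"
    using finite_ksets by (intro card_Un_disjoint[symmetric]) (auto intro: finite_subset)
  also have "\<dots> \<le> m choose t"
    using card_mono[OF finite_ksets \<open>G \<union> _ \<subseteq> _\<close>] card_ksets by simp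
  finally show ?thesis .
qed

theorem corollary2p1:
  fixes n k :: nat and G H :: "nat set set"
  assumes "0 < k" and "2 * k < n"
    and "G \<subseteq> ksets (n - 1) (k - 1)" and "H \<subseteq> ksets (n - 1) k"
    and "cross_intersecting G H"
    and "int (card G) > int ((n - 1) choose (k - 1)) - int ((n - k) choose (k - 1))"
  shows "card H \<le> k - 1"
proof (rule ccontr)
  assume "\<not> card H \<le> k - 1"
  then have "k \<le> card H" by simp
  then obtain F where F: "F \<subseteq> H" "card F = k"
    using obtain_subset_with_card_n by metis
  have "(n - k) choose (k - 1) = (\<Sum>i\<le>k - 1. (n - 1 - k - i) choose (k - 1 - i))"
    using sum_choose_diagonal[of "k - 1" "n - 1 - k"] assms(1,2) by (simp add: Suc_diff_Suc)
  also have "{..k - 1} = {..<card F}"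
    using F(2) assms(1) by auto
  also have "(\<Sum>i<card F. (n - 1 - k - i) choose (k - 1 - i))
               \<le> card (disjoint_ksets (n - 1) (k - 1) F)"
    using sum_choose_le_card_disjoint_ksets[of "k - 1" k "n - 1" F] F assms(1,2,4) by auto
  finally have "(n - k) choose (k - 1) \<le> card (disjoint_ksets (n - 1) (k - 1) F)" .
  moreover have "cross_intersecting G F"
    using assms(5) F(1) unfolding cross_intersecting_def by blast
  ultimately show False
    using card_add_card_disjoint_ksets_le[OF assms(3)] assms(6) by fastforce
qed

end
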